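(* Let $n\ge 2$ and let $\mathcal{B}$ be a nonempty subset of $\mathbb{S}^n$. Suppose that there exist positive numbers $\alpha_B>0$ $(B\in\mathcal{B})$ such that $\alpha_A A+\alpha_B B\in\mathbb{S}^n_+$ for every distinct pair $A,B\in\mathcal{B}$ (Condition (D)). Then: (1) (Condition (B)) for every $B\in\mathcal{B}$, $$\{X\in\mathbb{S}^n_+ : B\bullet X=0\}\subseteq\{X\in\mathbb{S}^n_+ : A\bullet X\ge 0 \text{ for all } A\in\mathcal{B}\};$$ (2) (Condition (B)') for every distinct pair $A,B\in\mathcal{B}$, $A_<\cap B_\le=\emptyset$, where for $C\in\mathbb{S}^n$, $$C_< = \left\{u\in\mathbb{R}^{n-1} : \begin{pmatrix}u\\1\end{pmatrix}^T C\begin{pmatrix}u\\1\end{pmatrix}<0\right\},\qquad C_\le = \left\{u\in\mathbb{R}^{n-1} : \begin{pmatrix}u\\1\end{pmatrix}^T C\begin{pmatrix}u\\1\end{pmatrix}\le 0\right\}.$$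
   Context: $\mathbb{S}^n$ denotes the space of real $n\times n$ symmetric matrices, $\mathbb{S}^n_+$ the cone of positive semidefinite matrices in $\mathbb{S}^n$, and $A\bullet X=\sum_{i,j}A_{ij}X_{ij}$ the trace inner product. *)

theory Defs
  imports Complex_Main
begin

text \<open>Real n x n matrices are represented as functions nat => nat => real,
  indexed by 0..n-1 and zero outside that range.\<close>

definition symmat :: "nat \<Rightarrow> (nat \<Rightarrow> nat \<Rightarrow> real) set" where
  "symmat n = {A. (\<forall>i j. A i j = A j i) \<and> (\<forall>i j. n \<le> i \<or> n \<le> j \<longrightarrow> A i j = 0)}"

definition quadform :: "nat \<Rightarrow> (nat \<Rightarrow> nat \<Rightarrow> real) \<Rightarrow> (nat \<Rightarrow> real) \<Rightarrow> real" where
  "quadform n A x = (\<Sum>i<n. \<Sum>j<n. x i * A i j * x j)"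

definition psdmat :: "nat \<Rightarrow> (nat \<Rightarrow> nat \<Rightarrow> real) set" where
  "psdmat n = {X \<in> symmat n. \<forall>x. 0 \<le> quadform n X x}"

definition frob :: "nat \<Rightarrow> (nat \<Rightarrow> nat \<Rightarrow> real) \<Rightarrow> (nat \<Rightarrow> nat \<Rightarrow> real) \<Rightarrow> real" where
  "frob n A X = (\<Sum>i<n. \<Sum>j<n. A i j * X i j)"

text \<open>Vectors of R^(n-1) are functions nat => real, zero from index n-1 on.
  ext1 n u is the vector (u;1) of R^n.\<close>

definition vecs :: "nat \<Rightarrow> (nat \<Rightarrow> real) set" where
  "vecs m = {u. \<forall>i\<ge>m. u i = 0}"

definition ext1 :: "nat \<Rightarrow> (nat \<Rightarrow> real) \<Rightarrow> (nat \<Rightarrow> real)" where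
  "ext1 n u = (\<lambda>i. if i < n - 1 then u i else if i = n - 1 then 1 else 0)"

definition lt_set :: "nat \<Rightarrow> (nat \<Rightarrow> nat \<Rightarrow> real) \<Rightarrow> (nat \<Rightarrow> real) set" where
  "lt_set n C = {u \<in> vecs (n - 1). quadform n C (ext1 n u) < 0}"

definition le_set :: "nat \<Rightarrow> (nat \<Rightarrow> nat \<Rightarrow> real) \<Rightarrow> (nat \<Rightarrow> real) set" where
  "le_set n C = {u \<in> vecs (n - 1). quadform n C (ext1 n u) \<le> 0}"

end

theory Submission
  imports Defs
begin

text \<open>Condition (D) gives \<open>\<alpha>\<^sub>A A + \<alpha>\<^sub>B B \<succeq> 0\<close>. Pairing this matrix with a PSD \<open>X\<close>
  (the PSD cone is self-dual) yields \<open>\<alpha>\<^sub>A (A \<bullet> X) + \<alpha>\<^sub>B (B \<bullet> X) \<ge> 0\<close>, so \<open>B \<bullet> X = 0\<close>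
  forces \<open>A \<bullet> X \<ge> 0\<close>; evaluating its quadratic form at \<open>(u;1)\<close> yields
  \<open>\<alpha>\<^sub>A q\<^sub>A(u) + \<alpha>\<^sub>B q\<^sub>B(u) \<ge> 0\<close>, which excludes \<open>q\<^sub>A(u) < 0\<close> together with
  \<open>q\<^sub>B(u) \<le> 0\<close>.
  Self-duality, i.e. \<open>P \<bullet> X \<ge> 0\<close> for PSD \<open>P, X\<close>, is proved by induction on the
  index set: eliminating one index \<open>a\<close> of \<open>X\<close> by its Schur complement
  \<open>Y = X - X\<^sub>a X\<^sub>a\<^sup>T / X\<^sub>a\<^sub>a\<close> gives \<open>P \<bullet> X = P \<bullet> Y + X\<^sub>a\<^sup>T P X\<^sub>a / X\<^sub>a\<^sub>a\<close>.\<close>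

definition quad_on :: "nat set \<Rightarrow> (nat \<Rightarrow> nat \<Rightarrow> real) \<Rightarrow> (nat \<Rightarrow> real) \<Rightarrow> real" where
  "quad_on S M x = (\<Sum>i\<in>S. \<Sum>j\<in>S. x i * M i j * x j)"

definition frob_on :: "nat set \<Rightarrow> (nat \<Rightarrow> nat \<Rightarrow> real) \<Rightarrow> (nat \<Rightarrow> nat \<Rightarrow> real) \<Rightarrow> real" where
  "frob_on S P X = (\<Sum>i\<in>S. \<Sum>j\<in>S. P i j * X i j)"

definition psd_on :: "nat set \<Rightarrow> (nat \<Rightarrow> nat \<Rightarrow> real) \<Rightarrow> bool" where
  "psd_on S X \<longleftrightarrow> (\<forall>i j. X i j = X j i) \<and> (\<forall>x. 0 \<le> quad_on S X x)"

text \<open>For \<open>X a a = 0\<close> division by zero makes this \<open>X\<close> itself.\<close>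

definition schur_complement :: "nat \<Rightarrow> (nat \<Rightarrow> nat \<Rightarrow> real) \<Rightarrow> (nat \<Rightarrow> nat \<Rightarrow> real)" where
  "schur_complement a X = (\<lambda>i j. X i j - X a i * X a j / X a a)"

lemma quad_on_insert:
  assumes "finite S" "a \<notin> S" "\<And>i j. M i j = M j i"
  shows "quad_on (insert a S) M x
           = (x a)\<^sup>2 * M a a + 2 * x a * (\<Sum>j\<in>S. M a j * x j) + quad_on S M x"
proof -
  have "quad_on (insert a S) M x = x a * M a a * x a + (\<Sum>j\<in>S. x a * M a j * x j)
          + (\<Sum>i\<in>S. x i * M i a * x a) + quad_on S M x"
    using assms by (simp add: quad_on_def sum.distrib algebra_simps)
  moreover have "(\<Sum>i\<in>S. x i * M i a * x a) = x a * (\<Sum>j\<in>S. M a j * x j)"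
    by (simp add: sum_distrib_left assms(3) algebra_simps)
  moreover have "(\<Sum>j\<in>S. x a * M a j * x j) = x a * (\<Sum>j\<in>S. M a j * x j)"
    by (simp add: sum_distrib_left algebra_simps)
  ultimately show ?thesis by (simp add: power2_eq_square)
qed

lemma frob_on_insert:
  assumes "finite S" "a \<notin> S" "\<And>i j. P i j = P j i" "\<And>i j. X i j = X j i"
  shows "frob_on (insert a S) P X = P a a * X a a + 2 * (\<Sum>j\<in>S. P a j * X a j) + frob_on S P X"
proof -
  have "frob_on (insert a S) P X = P a a * X a a + (\<Sum>j\<in>S. P a j * X a j)
          + (\<Sum>i\<in>S. P i a * X i a) + frob_on S P X"
    using assms by (simp add: frob_on_def sum.distrib algebra_simps)
  moreover have "(\<Sum>i\<in>S. P i a * X i a) = (\<Sum>j\<in>S. P a j * X a j)"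
    using assms(3,4) by metis
  ultimately show ?thesis by simp
qed

lemma quad_on_fun_upd:
  assumes "a \<notin> S"
  shows "quad_on S M (x(a := t)) = quad_on S M x"
  using assms unfolding quad_on_def by (intro sum.cong refl) auto

lemma quad_on_schur_complement:
  "quad_on S (schur_complement a X) x = quad_on S X x - (\<Sum>j\<in>S. X a j * x j)\<^sup>2 / X a a"
proof -
  have "quad_on S (schur_complement a X) x
          = quad_on S X x - (\<Sum>i\<in>S. \<Sum>j\<in>S. (x i * X a i) * (X a j * x j)) / X a a"
    by (simp add: schur_complement_def quad_on_def sum_subtractf sum_divide_distrib
        algebra_simps)
  also have "(\<Sum>i\<in>S. \<Sum>j\<in>S. (x i * X a i) * (X a j * x j)) = (\<Sum>j\<in>S. X a j * x j)\<^sup>2"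
    by (simp add: power2_eq_square sum_product mult.commute)
  finally show ?thesis .
qed

lemma frob_on_schur_complement:
  "frob_on S P (schur_complement a X) = frob_on S P X - quad_on S P (X a) / X a a"
  by (simp add: schur_complement_def frob_on_def quad_on_def sum_subtractf sum_divide_distrib
      algebra_simps)

lemma affine_nonneg_imp_slope_zero:
  fixes L q :: real
  assumes "\<And>t. 0 \<le> t * L + q"
  shows "L = 0"
proof (rule ccontr)
  assume "L \<noteq> 0"
  have "0 \<le> (- (\<bar>q\<bar> + 1) / L) * L + q" by (rule assms)
  also have "(- (\<bar>q\<bar> + 1) / L) * L = - (\<bar>q\<bar> + 1)" using \<open>L \<noteq> 0\<close> by simp
  finally show False by linarith
qed

context
  fixes S :: "nat set" and a :: nat and X :: "nat \<Rightarrow> nat \<Rightarrow> real"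
  assumes fin: "finite S" and fresh: "a \<notin> S" and psd: "psd_on (insert a S) X"
begin

private lemma symmetric: "X i j = X j i"
  using psd by (simp add: psd_on_def)

private lemma quad_insert: "quad_on (insert a S) X x
    = (x a)\<^sup>2 * X a a + 2 * x a * (\<Sum>j\<in>S. X a j * x j) + quad_on S X x"
  using quad_on_insert[OF fin fresh] symmetric by blast

private lemma sum_row_fun_upd: "(\<Sum>j\<in>S. X a j * (x(a := t)) j) = (\<Sum>j\<in>S. X a j * x j)"
  using fresh by (intro sum.cong) auto

private lemma quad_nonneg: "0 \<le> quad_on (insert a S) X x"
  using psd by (simp add: psd_on_def)

lemma psd_on_insert_diag_nonneg: "0 \<le> X a a"
proof -
  have "0 \<le> quad_on (insert a S) X ((\<lambda>_. 0)(a := 1))"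
    by (rule quad_nonneg)
  also have "\<dots> = X a a"
    unfolding quad_insert sum_row_fun_upd quad_on_fun_upd[OF fresh] by (simp add: quad_on_def)
  finally show ?thesis .
qed

lemma psd_on_insertD: "psd_on S X"
proof -
  have "0 \<le> quad_on S X x" for x
    using quad_nonneg[of "x(a := 0)"]
    unfolding quad_insert quad_on_fun_upd[OF fresh] by simp
  then show ?thesis using symmetric by (simp add: psd_on_def)
qed

text \<open>A vanishing diagonal entry forces its row to vanish: otherwise the form, affine in
  \<open>x a\<close> when \<open>X a a = 0\<close>, would take negative values along \<open>x = X\<^sub>a\<close>.\<close>

lemma psd_on_insert_zero_diag_row:
  assumes "X a a = 0" "j \<in> S"
  shows "X a j = 0"
proof -
  have "0 \<le> t * (\<Sum>j\<in>S. X a j * X a j) + quad_on S X (X a)" for t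
    using quad_nonneg[of "(X a)(a := t / 2)"] assms(1)
    unfolding quad_insert quad_on_fun_upd[OF fresh] sum_row_fun_upd by simp
  then have "(\<Sum>j\<in>S. X a j * X a j) = 0"
    by (rule affine_nonneg_imp_slope_zero)
  then show ?thesis
    using fin assms(2) by (simp add: sum_nonneg_eq_0_iff)
qed

lemma psd_on_schur_complement: "psd_on S (schur_complement a X)"
proof (cases "X a a = 0")
  case True
  then have "schur_complement a X = X" by (simp add: schur_complement_def)
  then show ?thesis using psd_on_insertD by simp
next
  case False
  then have d: "X a a > 0" using psd_on_insert_diag_nonneg by simp
  have "0 \<le> quad_on S (schur_complement a X) x" for x
  proof -
    define L where "L = (\<Sum>j\<in>S. X a j * x j)"
    have "0 \<le> quad_on (insert a S) X (x(a := - L / X a a))"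
      by (rule quad_nonneg)
    also have "\<dots> = (L / X a a)\<^sup>2 * X a a - 2 * (L / X a a) * L + quad_on S X x"
      unfolding quad_insert quad_on_fun_upd[OF fresh] sum_row_fun_upd L_def by simp
    also have "\<dots> = quad_on S X x - L\<^sup>2 / X a a"
      using d by (simp add: field_simps power2_eq_square)
    finally show ?thesis by (simp add: quad_on_schur_complement L_def)
  qed
  then show ?thesis
    using symmetric by (simp add: psd_on_def schur_complement_def mult.commute)
qed

lemma frob_on_insert_eq_schur_complement:
  assumes "\<And>i j. P i j = P j i"
  shows "frob_on (insert a S) P X
           = frob_on S P (schur_complement a X) + quad_on (insert a S) P (X a) / X a a"
proof (cases "X a a = 0")
  case True
  then have "X a j = 0" if "j \<in> S" for j
    using psd_on_insert_zero_diag_row that by blast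
  with True show ?thesis
    using frob_on_insert[OF fin fresh assms symmetric]
    by (simp add: schur_complement_def)
next
  case False
  have "quad_on (insert a S) P (X a) / X a a
          = X a a * P a a + 2 * (\<Sum>j\<in>S. P a j * X a j) + quad_on S P (X a) / X a a"
    using False by (simp add: quad_on_insert[OF fin fresh assms] field_simps power2_eq_square)
  then show ?thesis
    by (simp add: frob_on_insert[OF fin fresh assms symmetric] frob_on_schur_complement)
qed

end

lemma frob_on_psd_nonneg:
  assumes "finite S" "psd_on S P" "psd_on S X"
  shows "0 \<le> frob_on S P X"
  using assms
proof (induction S arbitrary: X rule: finite_induct)
  case empty
  then show ?case by (simp add: frob_on_def)
next
  case (insert a S)
  have P_sym: "P i j = P j i" for i j
    using insert.prems(1) by (simp add: psd_on_def)
  have "0 \<le> frob_on S P (schur_complement a X)"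
    using insert psd_on_insertD psd_on_schur_complement by blast
  moreover have "0 \<le> quad_on (insert a S) P (X a) / X a a"
    using insert psd_on_insert_diag_nonneg by (simp add: psd_on_def)
  ultimately show ?case
    using insert frob_on_insert_eq_schur_complement[OF _ _ _ P_sym] by simp
qed

lemma psdmat_eq_psd_on: "X \<in> psdmat n \<longleftrightarrow> X \<in> symmat n \<and> psd_on {..<n} X"
  by (auto simp: psdmat_def symmat_def psd_on_def quadform_def quad_on_def)

lemma frob_psdmat_nonneg:
  assumes "P \<in> psdmat n" "X \<in> psdmat n"
  shows "0 \<le> frob n P X"
  using frob_on_psd_nonneg[of "{..<n}" P X] assms
  by (simp add: psdmat_eq_psd_on frob_def frob_on_def)

lemma quadform_lincomb:
  "quadform n (\<lambda>i j. a * A i j + b * B i j) x = a * quadform n A x + b * quadform n B x"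
  by (simp add: quadform_def sum.distrib sum_distrib_left algebra_simps)

lemma frob_lincomb:
  "frob n (\<lambda>i j. a * A i j + b * B i j) X = a * frob n A X + b * frob n B X"
  by (simp add: frob_def sum.distrib sum_distrib_left algebra_simps)

lemma frob_nonneg_if_lincomb_psd:
  assumes "0 < a" "(\<lambda>i j. a * A i j + b * B i j) \<in> psdmat n"
    and "X \<in> psdmat n" "frob n B X = 0"
  shows "0 \<le> frob n A X"
proof -
  have "0 \<le> frob n (\<lambda>i j. a * A i j + b * B i j) X"
    using assms(2,3) by (rule frob_psdmat_nonneg)
  then have "0 \<le> a * frob n A X"
    using assms(4) by (simp add: frob_lincomb)
  then show ?thesis
    using assms(1) by (simp add: zero_le_mult_iff)
qed

lemma lt_set_le_set_disjoint_if_lincomb_psd: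
  assumes "0 < a" "0 < b" "(\<lambda>i j. a * A i j + b * B i j) \<in> psdmat n"
  shows "lt_set n A \<inter> le_set n B = {}"
proof -
  have "\<not> (quadform n A v < 0 \<and> quadform n B v \<le> 0)" for v
  proof -
    have "0 \<le> a * quadform n A v + b * quadform n B v"
      using assms(3) by (simp add: psdmat_def quadform_lincomb)
    then show ?thesis
      using assms(1,2) mult_pos_neg[of a "quadform n A v"]
        mult_nonneg_nonpos[of b "quadform n B v"]
      by linarith
  qed
  then show ?thesis by (auto simp: lt_set_def le_set_def)
qed

theorem theorem1p1:
  fixes n :: nat and \<B> :: "(nat \<Rightarrow> nat \<Rightarrow> real) set"
  assumes "n \<ge> 2"
    and "\<B> \<noteq> {}" and "\<B> \<subseteq> symmat n"
    and "\<exists>\<alpha> :: (nat \<Rightarrow> nat \<Rightarrow> real) \<Rightarrow> real.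
           (\<forall>B\<in>\<B>. \<alpha> B > 0) \<and>
           (\<forall>A\<in>\<B>. \<forall>B\<in>\<B>. A \<noteq> B \<longrightarrow>
              (\<lambda>i j. \<alpha> A * A i j + \<alpha> B * B i j) \<in> psdmat n)"
  shows "(\<forall>B\<in>\<B>. {X \<in> psdmat n. frob n B X = 0}
                   \<subseteq> {X \<in> psdmat n. \<forall>A\<in>\<B>. frob n A X \<ge> 0})
       \<and> (\<forall>A\<in>\<B>. \<forall>B\<in>\<B>. A \<noteq> B \<longrightarrow> lt_set n A \<inter> le_set n B = {})"
proof -
  obtain \<alpha> :: "(nat \<Rightarrow> nat \<Rightarrow> real) \<Rightarrow> real" where
    pos: "\<forall>B\<in>\<B>. \<alpha> B > 0" and
    psd: "\<forall>A\<in>\<B>. \<forall>B\<in>\<B>. A \<noteq> B \<longrightarrow> (\<lambda>i j. \<alpha> A * A i j + \<alpha> B * B i j) \<in> psdmat n"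
    using assms(4) by blast
  have "0 \<le> frob n A X"
    if "A \<in> \<B>" "B \<in> \<B>" "X \<in> psdmat n" "frob n B X = 0" for A B X
    using that pos psd frob_nonneg_if_lincomb_psd[of "\<alpha> A" A "\<alpha> B" B n X]
    by (cases "A = B") auto
  moreover have "lt_set n A \<inter> le_set n B = {}" if "A \<in> \<B>" "B \<in> \<B>" "A \<noteq> B" for A B
    using that pos psd lt_set_le_set_disjoint_if_lincomb_psd[of "\<alpha> A" "\<alpha> B" A B n] by blast
  ultimately show ?thesis by blast
qed

end
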